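(* Let $r\geq 2$ and let $\mathcal{G}$, $\mathcal{H}$ and $\Gamma$ be $r$-uniform supertrees, where $\mathcal{G}$ and $\mathcal{H}$ have the same number of vertices. Let $u\in V(\mathcal{G})$ and $v\in V(\mathcal{H})$. If $\varphi(\mathcal{G},x)=\varphi(\mathcal{H},x)$ and $\varphi(\mathcal{G}-u,x)=\varphi(\mathcal{H}-v,x)$, then for every $w\in V(\Gamma)$ we have $\varphi(\mathcal{G}(u,w)\Gamma,x)=\varphi(\mathcal{H}(v,w)\Gamma,x)$.
   Context: An $r$-uniform hypergraph has every edge consisting of exactly $r$ vertices; an $r$-uniform supertree is a connected acyclic $r$-uniform hypergraph (for $r=2$, an ordinary tree). For an $r$-uniform hypergraph $\mathcal{H}$ on $n$ vertices, $m(\mathcal{H},k)$ denotes the number of $k$-matchings (sets of $k$ pairwise disjoint edges), with $m(\mathcal{H},0)=1$, and the matching polynomial is $\varphi(\mathcal{H},x)=\sum_{k\geq 0}(-1)^k m(\mathcal{H},k)x^{n-kr}$. For a vertex $u$, $\mathcal{H}-u$ is obtained by deleting $u$ and all edges containing $u$ (the other vertices of those edges remain). For disjoint hypergraphs $\mathcal{G},\Gamma$ with $u\in V(\mathcal{G})$, $w\in V(\Gamma)$, $\mathcal{G}(u,w)\Gamma$ denotes the hypergraph obtained from $\mathcal{G}\cup\Gamma$ by identifying $u$ with $w$. *)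

theory Defs
  imports "HOL-Computational_Algebra.Polynomial"
begin

type_synonym 'a hypergraph = "'a set \<times> 'a set set"

definition verts :: "'a hypergraph \<Rightarrow> 'a set" where "verts H = fst H"
definition hedges :: "'a hypergraph \<Rightarrow> 'a set set" where "hedges H = snd H"

definition uniform_hg :: "nat \<Rightarrow> 'a hypergraph \<Rightarrow> bool" where
  "uniform_hg r H \<longleftrightarrow> finite (verts H) \<and>
     (\<forall>e\<in>hedges H. e \<subseteq> verts H \<and> card e = r)"

definition hg_connected :: "'a hypergraph \<Rightarrow> bool" where
  "hg_connected H \<longleftrightarrow> (\<forall>x\<in>verts H. \<forall>y\<in>verts H.
     (x, y) \<in> {(a, b). \<exists>e\<in>hedges H. a \<in> e \<and> b \<in> e}\<^sup>*)"

definition has_berge_cycle :: "'a hypergraph \<Rightarrow> bool" where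
  "has_berge_cycle H \<longleftrightarrow> (\<exists>vs es. length vs = length es \<and> length vs \<ge> 2 \<and>
     distinct vs \<and> distinct es \<and> set es \<subseteq> hedges H \<and>
     (\<forall>i < length vs. vs ! i \<in> es ! i \<and> vs ! ((i + 1) mod length vs) \<in> es ! i))"

definition supertree :: "nat \<Rightarrow> 'a hypergraph \<Rightarrow> bool" where
  "supertree r H \<longleftrightarrow> uniform_hg r H \<and> hg_connected H \<and> \<not> has_berge_cycle H"

definition num_matchings :: "'a hypergraph \<Rightarrow> nat \<Rightarrow> nat" where
  "num_matchings H k = card {M. M \<subseteq> hedges H \<and> card M = k \<and>
       (\<forall>e\<in>M. \<forall>f\<in>M. e \<noteq> f \<longrightarrow> e \<inter> f = {})}"

definition matching_poly :: "nat \<Rightarrow> 'a hypergraph \<Rightarrow> int poly" where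
  "matching_poly r H = (\<Sum>k\<le>card (verts H).
      monom ((-1) ^ k * int (num_matchings H k)) (card (verts H) - k * r))"

definition del_vertex :: "'a hypergraph \<Rightarrow> 'a \<Rightarrow> 'a hypergraph" where
  "del_vertex H u = (verts H - {u}, {e\<in>hedges H. u \<notin> e})"

text \<open>G(u,w)Gamma: disjoint union (via the sum type) identifying u with w.\<close>
definition coalesce :: "'a hypergraph \<Rightarrow> 'a \<Rightarrow> 'b hypergraph \<Rightarrow> 'b \<Rightarrow> ('a + 'b) hypergraph" where
  "coalesce G u \<Gamma> w =
     (let g = (\<lambda>x. if x = w then Inl u else Inr x) in
      (Inl ` verts G \<union> g ` verts \<Gamma>,
       ((`) Inl) ` hedges G \<union> ((`) g) ` hedges \<Gamma>))"

end

theory Submission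
  imports Defs
begin

text \<open>
  A matching of \<open>G(u,w)\<Gamma>\<close> is the union of a matching of \<open>G\<close> and a matching of \<open>\<Gamma>\<close> that do
  not both cover the identified vertex. Sorting by the size \<open>i\<close> of the \<open>G\<close>-part,
  \<open>m(G(u,w)\<Gamma>, k) = \<Sum>\<^sub>i m(G-u, i) m(\<Gamma>, k-i) + (m(G, i) - m(G-u, i)) m(\<Gamma>-w, k-i)\<close>,
  so \<open>G\<close> and \<open>u\<close> enter only through the matching numbers of \<open>G\<close> and \<open>G-u\<close>. These are read
  off the coefficients of \<open>\<phi>(G)\<close> and \<open>\<phi>(G-u)\<close>, whose exponents \<open>n - k r\<close> are pairwise
  distinct.
\<close>

definition matchings :: "'a hypergraph \<Rightarrow> 'a set set set" where
  "matchings H = {M. M \<subseteq> hedges H \<and> pairwise disjnt M}"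

lemma num_matchings_eq_card: "num_matchings H k = card {M \<in> matchings H. card M = k}"
  unfolding num_matchings_def matchings_def pairwise_def disjnt_def
  by (rule arg_cong[where f = card]) auto

lemma finite_hedges: "uniform_hg r H \<Longrightarrow> finite (hedges H)"
  unfolding uniform_hg_def by (meson Pow_iff finite_Pow_iff finite_subset subsetI)

lemma finite_matchings: "uniform_hg r H \<Longrightarrow> finite (matchings H)"
  using finite_hedges[of r H] unfolding matchings_def
  by (auto intro: finite_subset[of _ "Pow (hedges H)"])

lemma finite_matching: "uniform_hg r H \<Longrightarrow> M \<in> matchings H \<Longrightarrow> finite M"
  using finite_hedges[of r H] unfolding matchings_def by (auto intro: finite_subset)

lemma edge_not_subset_singleton:
  assumes "uniform_hg r H" "r \<ge> 2" "f \<in> hedges H"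
  shows "\<not> f \<subseteq> {w}"
proof
  assume "f \<subseteq> {w}"
  then have "r \<le> card {w}"
    using assms(1,3) card_mono[of "{w}" f] unfolding uniform_hg_def by auto
  then show False
    using assms(2) by simp
qed

lemma card_matching_mult_le:
  assumes "uniform_hg r H" "M \<in> matchings H"
  shows "card M * r \<le> card (verts H)"
proof -
  have fin: "finite (verts H)" and edges: "\<And>e. e \<in> M \<Longrightarrow> card e = r \<and> e \<subseteq> verts H"
    and "pairwise disjnt M"
    using assms unfolding uniform_hg_def matchings_def by auto
  then have "card (\<Union>M) = sum card M"
    by (intro card_Union_disjoint) (auto intro: finite_subset)
  also have "\<dots> = card M * r"
    using edges by simp
  finally show ?thesis
    using edges fin by (metis Union_least card_mono)
qed

lemma num_matchings_eq_0:
  assumes "uniform_hg r H" "card (verts H) < k * r"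
  shows "num_matchings H k = 0"
proof -
  have "{M \<in> matchings H. card M = k} = {}"
    using card_matching_mult_le[OF assms(1)] assms(2) by fastforce
  then show ?thesis
    by (simp only: num_matchings_eq_card card.empty)
qed

lemma coeff_matching_poly:
  assumes "uniform_hg r H" "r > 0" "k * r \<le> card (verts H)"
  shows "coeff (matching_poly r H) (card (verts H) - k * r) = (-1) ^ k * int (num_matchings H k)"
proof -
  let ?n = "card (verts H)" and ?c = "\<lambda>k. (-1) ^ k * int (num_matchings H k)"
  have same_exp: "?n - i * r = ?n - k * r \<longleftrightarrow> i = k" if "i * r \<le> ?n" for i
    using that assms(2,3) by (metis diff_diff_cancel mult_right_cancel not_gr0)
  have "coeff (matching_poly r H) (?n - k * r) = (\<Sum>i\<le>?n. if ?n - i * r = ?n - k * r then ?c i else 0)"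
    unfolding matching_poly_def coeff_sum coeff_monom by simp
  also have "\<dots> = (\<Sum>i\<le>?n. if i = k then ?c i else 0)"
  proof (intro sum.cong refl)
    fix i
    show "(if ?n - i * r = ?n - k * r then ?c i else 0) = (if i = k then ?c i else 0)"
      by (cases "i * r \<le> ?n") (auto simp: same_exp num_matchings_eq_0[OF assms(1)])
  qed
  also have "\<dots> = ?c k"
    using assms(2,3) by (simp add: order.trans[OF _ assms(3)])
  finally show ?thesis .
qed

lemma num_matchings_eq_if_matching_poly_eq:
  assumes "uniform_hg r G" "uniform_hg r H" "r > 0"
    and "card (verts G) = card (verts H)" "matching_poly r G = matching_poly r H"
  shows "num_matchings G k = num_matchings H k"
proof (cases "k * r \<le> card (verts G)")
  case True
  then show ?thesis
    using coeff_matching_poly[OF assms(1,3) True] coeff_matching_poly[OF assms(2,3)] assms(4,5)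
    by simp
next
  case False
  then show ?thesis
    using num_matchings_eq_0[OF assms(1)] num_matchings_eq_0[OF assms(2)] assms(4) by simp
qed

lemma uniform_hg_del_vertex: "uniform_hg r H \<Longrightarrow> uniform_hg r (del_vertex H u)"
  unfolding uniform_hg_def del_vertex_def verts_def hedges_def by auto

lemma card_verts_del_vertex:
  "finite (verts H) \<Longrightarrow> u \<in> verts H \<Longrightarrow> card (verts (del_vertex H u)) = card (verts H) - 1"
  unfolding del_vertex_def verts_def by simp

lemma matchings_del_vertex: "matchings (del_vertex H u) = {M \<in> matchings H. u \<notin> \<Union>M}"
  unfolding matchings_def del_vertex_def hedges_def by auto

lemma card_matchings_avoiding:
  "card {M \<in> matchings H. card M = i \<and> u \<notin> \<Union>M} = num_matchings (del_vertex H u) i"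
  unfolding num_matchings_eq_card matchings_del_vertex by (rule arg_cong[where f = card]) auto

lemma card_matchings_covering:
  assumes "uniform_hg r H"
  shows "card {M \<in> matchings H. card M = i \<and> u \<in> \<Union>M} =
    num_matchings H i - num_matchings (del_vertex H u) i"
proof -
  have "{M \<in> matchings H. card M = i \<and> u \<in> \<Union>M} =
      {M \<in> matchings H. card M = i} - {M \<in> matchings H. card M = i \<and> u \<notin> \<Union>M}"
    by auto
  also have "card \<dots> = card {M \<in> matchings H. card M = i}
      - card {M \<in> matchings H. card M = i \<and> u \<notin> \<Union>M}"
    using finite_matchings[OF assms] by (intro card_Diff_subset) auto
  finally show ?thesis
    by (simp only: card_matchings_avoiding num_matchings_eq_card)
qed

lemma card_pairs_with_sum:
  fixes f :: "'a \<Rightarrow> nat" and g :: "'b \<Rightarrow> nat"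
  assumes "finite X" "finite Y"
  shows "card {(x, y) \<in> X \<times> Y. \<not> (p x \<and> q y) \<and> f x + g y = k} =
    (\<Sum>i\<le>k. card {x \<in> X. f x = i \<and> \<not> p x} * card {y \<in> Y. g y = k - i}
          + card {x \<in> X. f x = i \<and> p x} * card {y \<in> Y. g y = k - i \<and> \<not> q y})"
proof -
  define S where "S i =
    {x \<in> X. f x = i \<and> \<not> p x} \<times> {y \<in> Y. g y = k - i} \<union>
    {x \<in> X. f x = i \<and> p x} \<times> {y \<in> Y. g y = k - i \<and> \<not> q y}" for i
  have "{(x, y) \<in> X \<times> Y. \<not> (p x \<and> q y) \<and> f x + g y = k} = (\<Union>i\<le>k. S i)"
  proof (intro equalityI subsetI)
    fix z assume "z \<in> {(x, y) \<in> X \<times> Y. \<not> (p x \<and> q y) \<and> f x + g y = k}"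
    then show "z \<in> (\<Union>i\<le>k. S i)"
      by (auto simp: S_def intro!: UN_I[where a = "f (fst z)"])
  qed (auto simp: S_def)
  moreover have "card (\<Union>i\<le>k. S i) = (\<Sum>i\<le>k. card (S i))"
    using assms by (intro card_UN_disjoint) (auto simp: S_def)
  moreover have "card (S i) =
      card {x \<in> X. f x = i \<and> \<not> p x} * card {y \<in> Y. g y = k - i}
      + card {x \<in> X. f x = i \<and> p x} * card {y \<in> Y. g y = k - i \<and> \<not> q y}" for i
    unfolding S_def using assms by (subst card_Un_disjoint) (auto simp: card_cartesian_product)
  ultimately show ?thesis
    by simp
qed

lemma inj_on_image_image: "inj f \<Longrightarrow> inj_on ((`) f) A"
  by (simp add: inj_on_def inj_image_eq_iff)

lemma pairwise_disjnt_image_image: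
  "inj f \<Longrightarrow> pairwise disjnt ((`) f ` M) \<longleftrightarrow> pairwise disjnt M"
  by (auto simp: pairwise_def disjnt_def inj_image_eq_iff image_Int[symmetric])

lemma pairwise_disjnt_Un:
  "pairwise disjnt A \<Longrightarrow> pairwise disjnt B \<Longrightarrow> (\<And>a b. a \<in> A \<Longrightarrow> b \<in> B \<Longrightarrow> disjnt a b)
    \<Longrightarrow> pairwise disjnt (A \<union> B)"
  unfolding pairwise_def by (metis Un_iff disjnt_sym)

definition glue :: "'a \<Rightarrow> 'b \<Rightarrow> 'b \<Rightarrow> 'a + 'b" where
  "glue u w x = (if x = w then Inl u else Inr x)"

lemma verts_coalesce: "verts (coalesce G u \<Gamma> w) = Inl ` verts G \<union> glue u w ` verts \<Gamma>"
  unfolding coalesce_def verts_def glue_def[abs_def] by (simp add: Let_def)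

lemma hedges_coalesce:
  "hedges (coalesce G u \<Gamma> w) = (`) Inl ` hedges G \<union> (`) (glue u w) ` hedges \<Gamma>"
  unfolding coalesce_def hedges_def glue_def[abs_def] by (simp add: Let_def)

lemma card_verts_coalesce:
  assumes "finite (verts G)" "finite (verts \<Gamma>)" "u \<in> verts G" "w \<in> verts \<Gamma>"
  shows "card (verts (coalesce G u \<Gamma> w)) = card (verts G) + (card (verts \<Gamma>) - 1)"
proof -
  have "verts (coalesce G u \<Gamma> w) = Inl ` verts G \<union> Inr ` (verts \<Gamma> - {w})"
    using assms(3,4) by (auto simp: verts_coalesce glue_def)
  moreover have "card (Inl ` verts G \<union> Inr ` (verts \<Gamma> - {w}) :: ('a + 'b) set) =
      card (verts G) + card (verts \<Gamma> - {w})"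
    using assms(1,2) by (subst card_Un_disjoint) (auto simp: card_image)
  ultimately show ?thesis
    using assms by simp
qed

lemma inj_glue: "inj (glue u w)"
  unfolding glue_def inj_def by auto

lemma Inl_image_Int_glue_image:
  "Inl ` e \<inter> glue u w ` f = (if u \<in> e \<and> w \<in> f then {Inl u} else {})"
  unfolding glue_def by force

definition glue_matchings :: "'a \<Rightarrow> 'b \<Rightarrow> 'a set set \<times> 'b set set \<Rightarrow> ('a + 'b) set set" where
  "glue_matchings u w = (\<lambda>(M1, M2). (`) Inl ` M1 \<union> (`) (glue u w) ` M2)"

lemma glue_matchings_in_matchings:
  assumes "M1 \<in> matchings G" "M2 \<in> matchings \<Gamma>" "\<not> (u \<in> \<Union>M1 \<and> w \<in> \<Union>M2)"
  shows "glue_matchings u w (M1, M2) \<in> matchings (coalesce G u \<Gamma> w)"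
proof -
  have "pairwise disjnt ((`) Inl ` M1 :: ('a + 'b) set set)" "pairwise disjnt ((`) (glue u w) ` M2)"
    using assms(1,2) by (simp_all add: pairwise_disjnt_image_image inj_glue matchings_def)
  moreover have "disjnt (Inl ` e) (glue u w ` f)" if "e \<in> M1" "f \<in> M2" for e f
    using assms(3) that by (auto simp: disjnt_def Inl_image_Int_glue_image)
  ultimately have "pairwise disjnt (glue_matchings u w (M1, M2))"
    unfolding glue_matchings_def by (auto intro: pairwise_disjnt_Un)
  then show ?thesis
    using assms(1,2) by (auto simp: matchings_def glue_matchings_def hedges_coalesce)
qed

text \<open>
  Since \<open>r \<ge> 2\<close>, no edge of \<open>\<Gamma>\<close> lies inside \<open>{w}\<close>, so its image always contains an
  \<^const>\<open>Inr\<close>-vertex; this separates the \<open>G\<close>-part of a matching of the coalescence from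
  its \<open>\<Gamma>\<close>-part.
\<close>

context
  fixes \<Gamma> :: "'b hypergraph" and w :: 'b
  assumes no_edge_within_w: "\<forall>f\<in>hedges \<Gamma>. \<not> f \<subseteq> {w}"
begin

lemma glue_image_not_subset_range_Inl:
  assumes "f \<in> hedges \<Gamma>"
  shows "\<not> glue u w ` f \<subseteq> range Inl"
proof -
  obtain x where "x \<in> f" "x \<noteq> w"
    using no_edge_within_w assms by blast
  then have "glue u w x \<notin> range Inl"
    by (auto simp: glue_def)
  with \<open>x \<in> f\<close> show ?thesis
    by blast
qed

lemma Inl_part_glue_matchings:
  "M2 \<subseteq> hedges \<Gamma> \<Longrightarrow> {E \<in> glue_matchings u w (M1, M2). E \<subseteq> range Inl} = (`) Inl ` M1"
  by (auto simp: glue_matchings_def dest: glue_image_not_subset_range_Inl)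

lemma glue_part_glue_matchings:
  "M2 \<subseteq> hedges \<Gamma> \<Longrightarrow> {E \<in> glue_matchings u w (M1, M2). \<not> E \<subseteq> range Inl} = (`) (glue u w) ` M2"
  by (auto simp: glue_matchings_def dest: glue_image_not_subset_range_Inl)

lemma inj_on_glue_matchings:
  "inj_on (glue_matchings u w :: 'a set set \<times> 'b set set \<Rightarrow> _) {(M1, M2). M2 \<subseteq> hedges \<Gamma>}"
proof (intro inj_onI, clarify)
  fix M1 M2 N1 N2
  assume M2: "M2 \<subseteq> hedges \<Gamma>" and N2: "N2 \<subseteq> hedges \<Gamma>"
    and eq: "glue_matchings u w (M1, M2) = glue_matchings u w (N1, N2)"
  have "(`) Inl ` M1 = {E \<in> glue_matchings u w (M1, M2). E \<subseteq> range Inl}"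
    by (rule Inl_part_glue_matchings[OF M2, symmetric])
  also have "\<dots> = (`) Inl ` N1"
    unfolding eq by (rule Inl_part_glue_matchings[OF N2])
  finally have Inl_eq: "((`) Inl ` M1 :: ('a + 'b) set set) = (`) Inl ` N1" .
  have "(`) (glue u w) ` M2 = {E \<in> glue_matchings u w (M1, M2). \<not> E \<subseteq> range Inl}"
    by (rule glue_part_glue_matchings[OF M2, symmetric])
  also have "\<dots> = (`) (glue u w) ` N2"
    unfolding eq by (rule glue_part_glue_matchings[OF N2])
  finally have glue_eq: "(`) (glue u w) ` M2 = (`) (glue u w) ` N2" .
  show "M1 = N1 \<and> M2 = N2"
    using inj_image_eq_iff[OF inj_on_image_image[OF inj_Inl]] Inl_eq
      inj_image_eq_iff[OF inj_on_image_image[OF inj_glue]] glue_eq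
    by (metis (no_types))
qed

lemma card_glue_matchings:
  fixes M1 :: "'a set set"
  assumes "finite M1" "finite M2" "M2 \<subseteq> hedges \<Gamma>"
  shows "card (glue_matchings u w (M1, M2)) = card M1 + card M2"
proof -
  have "inj_on ((`) (Inl :: 'a \<Rightarrow> 'a + 'b)) M1" "inj_on ((`) (glue u w)) M2"
    by (simp_all add: inj_on_image_image inj_glue)
  moreover have "Inl ` e \<noteq> glue u w ` f" if "f \<in> M2" for e f
  proof
    assume "Inl ` e = glue u w ` f"
    then have "glue u w ` f \<subseteq> range Inl"
      by (metis image_mono subset_UNIV)
    then show False
      using glue_image_not_subset_range_Inl[of f u] assms(3) that by blast
  qed
  then have "(`) Inl ` M1 \<inter> (`) (glue u w) ` M2 = {}"
    by blast
  ultimately show ?thesis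
    using assms(1,2) by (simp add: glue_matchings_def card_Un_disjoint card_image)
qed

lemma matchings_coalesce:
  "matchings (coalesce G u \<Gamma> w) =
    glue_matchings u w ` {(M1, M2) \<in> matchings G \<times> matchings \<Gamma>. \<not> (u \<in> \<Union>M1 \<and> w \<in> \<Union>M2)}"
proof (intro equalityI subsetI)
  fix M assume M: "M \<in> matchings (coalesce G u \<Gamma> w)"
  define M1 where "M1 = {e \<in> hedges G. Inl ` e \<in> M}"
  define M2 where "M2 = {f \<in> hedges \<Gamma>. glue u w ` f \<in> M}"
  have "M \<subseteq> (`) Inl ` hedges G \<union> (`) (glue u w) ` hedges \<Gamma>" and disj: "pairwise disjnt M"
    using M by (simp_all add: matchings_def hedges_coalesce)
  then have "M = glue_matchings u w (M1, M2)"
    by (auto simp: glue_matchings_def M1_def M2_def)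
  moreover have "(`) Inl ` M1 \<subseteq> M" "(`) (glue u w) ` M2 \<subseteq> M"
    by (auto simp: M1_def M2_def)
  then have "pairwise disjnt M1" "pairwise disjnt M2"
    using pairwise_subset[OF disj] pairwise_disjnt_image_image[OF inj_Inl]
      pairwise_disjnt_image_image[OF inj_glue]
    by metis+
  then have "M1 \<in> matchings G" "M2 \<in> matchings \<Gamma>"
    by (auto simp: matchings_def M1_def M2_def)
  moreover have "\<not> (u \<in> \<Union>M1 \<and> w \<in> \<Union>M2)"
  proof
    assume "u \<in> \<Union>M1 \<and> w \<in> \<Union>M2"
    then obtain e f where "e \<in> M1" "f \<in> M2" "u \<in> e" "w \<in> f"
      by blast
    then have "Inl ` e \<in> M" "glue u w ` f \<in> M" "Inl ` e \<noteq> glue u w ` f"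
      "Inl ` e \<inter> glue u w ` f \<noteq> {}"
      using glue_image_not_subset_range_Inl[of f u]
      by (auto simp: M1_def M2_def Inl_image_Int_glue_image)
    then show False
      using disj by (auto simp: pairwise_def disjnt_def)
  qed
  ultimately show "M \<in> glue_matchings u w `
      {(M1, M2) \<in> matchings G \<times> matchings \<Gamma>. \<not> (u \<in> \<Union>M1 \<and> w \<in> \<Union>M2)}"
    by blast
qed (auto intro: glue_matchings_in_matchings)

end

lemma num_matchings_coalesce:
  assumes G: "uniform_hg r G" and \<Gamma>: "uniform_hg r \<Gamma>" and "r \<ge> 2"
  shows "num_matchings (coalesce G u \<Gamma> w) k =
    (\<Sum>i\<le>k. num_matchings (del_vertex G u) i * num_matchings \<Gamma> (k - i)
      + (num_matchings G i - num_matchings (del_vertex G u) i) * num_matchings (del_vertex \<Gamma> w) (k - i))"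
proof -
  have no_edge: "\<forall>f\<in>hedges \<Gamma>. \<not> f \<subseteq> {w}"
    using edge_not_subset_singleton[OF \<Gamma> \<open>r \<ge> 2\<close>] by blast
  define Q where "Q = {(M1, M2) \<in> matchings G \<times> matchings \<Gamma>. \<not> (u \<in> \<Union>M1 \<and> w \<in> \<Union>M2)}"
  define Qk where "Qk = {(M1, M2) \<in> Q. card M1 + card M2 = k}"
  have "card (glue_matchings u w (M1, M2)) = card M1 + card M2" if "(M1, M2) \<in> Q" for M1 M2
    using that finite_matching[OF G] finite_matching[OF \<Gamma>]
    by (intro card_glue_matchings[OF no_edge]) (auto simp: Q_def matchings_def)
  then have "{M \<in> matchings (coalesce G u \<Gamma> w). card M = k} = glue_matchings u w ` Qk"
    unfolding matchings_coalesce[OF no_edge] Q_def[symmetric] Qk_def by auto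
  moreover have "inj_on (glue_matchings u w) Qk"
    by (rule inj_on_subset[OF inj_on_glue_matchings[OF no_edge]])
      (auto simp: Qk_def Q_def matchings_def)
  ultimately have "num_matchings (coalesce G u \<Gamma> w) k = card Qk"
    by (simp add: num_matchings_eq_card card_image)
  also have "\<dots> = card {(M1, M2) \<in> matchings G \<times> matchings \<Gamma>.
      \<not> (u \<in> \<Union>M1 \<and> w \<in> \<Union>M2) \<and> card M1 + card M2 = k}"
    unfolding Qk_def Q_def by (rule arg_cong[where f = card]) auto
  also have "\<dots> = (\<Sum>i\<le>k. card {M \<in> matchings G. card M = i \<and> u \<notin> \<Union>M} * num_matchings \<Gamma> (k - i)
      + card {M \<in> matchings G. card M = i \<and> u \<in> \<Union>M} *
        card {M \<in> matchings \<Gamma>. card M = k - i \<and> w \<notin> \<Union>M})"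
    unfolding num_matchings_eq_card
    by (rule card_pairs_with_sum[OF finite_matchings[OF G] finite_matchings[OF \<Gamma>],
          where p = "\<lambda>M. u \<in> \<Union>M" and q = "\<lambda>M. w \<in> \<Union>M" and f = card and g = card])
  finally show ?thesis
    by (simp only: card_matchings_avoiding card_matchings_covering[OF G])
qed

theorem lemma8:
  fixes r :: nat and G :: "'a hypergraph" and H :: "'c hypergraph" and \<Gamma> :: "'b hypergraph"
    and u :: 'a and v :: 'c and w :: 'b
  assumes "r \<ge> 2"
    and "supertree r G" and "supertree r H" and "supertree r \<Gamma>"
    and "card (verts G) = card (verts H)"
    and "u \<in> verts G" and "v \<in> verts H"
    and "matching_poly r G = matching_poly r H"
    and "matching_poly r (del_vertex G u) = matching_poly r (del_vertex H v)"
    and "w \<in> verts \<Gamma>"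
  shows "matching_poly r (coalesce G u \<Gamma> w) = matching_poly r (coalesce H v \<Gamma> w)"
proof -
  have G: "uniform_hg r G" and H: "uniform_hg r H" and \<Gamma>: "uniform_hg r \<Gamma>"
    using assms(2-4) by (simp_all add: supertree_def)
  then have fin: "finite (verts G)" "finite (verts H)" "finite (verts \<Gamma>)"
    by (simp_all add: uniform_hg_def)
  have "r > 0"
    using assms(1) by simp
  have "num_matchings G i = num_matchings H i" for i
    by (rule num_matchings_eq_if_matching_poly_eq[OF G H \<open>r > 0\<close> assms(5,8)])
  moreover have "num_matchings (del_vertex G u) i = num_matchings (del_vertex H v) i" for i
    using fin assms(5-7)
    by (intro num_matchings_eq_if_matching_poly_eq[OF uniform_hg_del_vertex[OF G]
          uniform_hg_del_vertex[OF H] \<open>r > 0\<close> _ assms(9)]) (simp add: card_verts_del_vertex)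
  ultimately have "num_matchings (coalesce G u \<Gamma> w) k = num_matchings (coalesce H v \<Gamma> w) k" for k
    by (simp add: num_matchings_coalesce[OF G \<Gamma> assms(1)] num_matchings_coalesce[OF H \<Gamma> assms(1)])
  moreover have "card (verts (coalesce G u \<Gamma> w)) = card (verts (coalesce H v \<Gamma> w))"
    using fin assms(5-7,10) by (simp add: card_verts_coalesce)
  ultimately show ?thesis
    unfolding matching_poly_def by simp
qed

end
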